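(* For any compact domain $\mathcal{K}\subset\mathbb{R}^{d_x}$, if $N<\max(d_x+1,d_y)$ then $\mathcal{N}_N(\sigma_\alpha)$ is not dense in $C(\mathcal{K},\mathbb{R}^{d_y})$ with respect to the uniform norm on $\mathcal{K}$; i.e., leaky-ReLU networks of width $N$ do not have the universal approximation property for $C(\mathcal{K},\mathbb{R}^{d_y})$.
   Context: Fix $\alpha\in\mathbb{R}^+\setminus\{1\}$ and let $\sigma_\alpha(x)=x$ for $x>0$ and $\sigma_\alpha(x)=\alpha x$ for $x\le 0$, applied coordinatewise (leaky-ReLU). A leaky-ReLU network of width $N$ and depth $L$ from $\mathbb{R}^{d_x}$ to $\mathbb{R}^{d_y}$ is a map $x\mapsto W_{L+1}\sigma_\alpha(W_L(\cdots\sigma_\alpha(W_1x+b_1)\cdots)+b_L)+b_{L+1}$ with $W_1\in\mathbb{R}^{N\times d_x}$, $W_i\in\mathbb{R}^{N\times N}$ for $2\le i\le L$, $b_i\in\mathbb{R}^N$ for $1\le i\le L$, $W_{L+1}\in\mathbb{R}^{d_y\times N}$, $b_{L+1}\in\mathbb{R}^{d_y}$. $\mathcal{N}_N(\sigma_\alpha)$ denotes the set of all such networks of width $N$ over all depths $L$. *)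

theory Defs
  imports "HOL-Analysis.Analysis"
begin

definition lrelu :: "real \<Rightarrow> real \<Rightarrow> real" where
  "lrelu \<alpha> x = (if x > 0 then x else \<alpha> * x)"

text \<open>Hidden states of width N are represented as functions nat => real,
  only indices i < N are meaningful (others are set to 0).\<close>
definition lrelu_act :: "real \<Rightarrow> nat \<Rightarrow> (nat \<Rightarrow> real) \<Rightarrow> (nat \<Rightarrow> real)" where
  "lrelu_act \<alpha> N v = (\<lambda>i. if i < N then lrelu \<alpha> (v i) else 0)"

definition first_layer ::
  "nat \<Rightarrow> (nat \<Rightarrow> 'dx \<Rightarrow> real) \<Rightarrow> (nat \<Rightarrow> real) \<Rightarrow> real^'dx::finite \<Rightarrow> (nat \<Rightarrow> real)" where
  "first_layer N W b x = (\<lambda>i. if i < N then (\<Sum>j\<in>UNIV. W i j * x $ j) + b i else 0)"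

definition hidden_layer ::
  "nat \<Rightarrow> (nat \<Rightarrow> nat \<Rightarrow> real) \<Rightarrow> (nat \<Rightarrow> real) \<Rightarrow> (nat \<Rightarrow> real) \<Rightarrow> (nat \<Rightarrow> real)" where
  "hidden_layer N W b v = (\<lambda>i. if i < N then (\<Sum>j<N. W i j * v j) + b i else 0)"

definition output_layer ::
  "nat \<Rightarrow> ('dy::finite \<Rightarrow> nat \<Rightarrow> real) \<Rightarrow> ('dy \<Rightarrow> real) \<Rightarrow> (nat \<Rightarrow> real) \<Rightarrow> real^'dy" where
  "output_layer N W b v = (\<chi> k. (\<Sum>j<N. W k j * v j) + b k)"

text \<open>A leaky-ReLU network of width N and depth L = 1 + length Ls:
  x |-> W_{L+1} sigma(W_L(... sigma(W_1 x + b_1) ...) + b_L) + b_{L+1}.\<close>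
definition lrelu_net_eval ::
  "real \<Rightarrow> nat \<Rightarrow> (nat \<Rightarrow> 'dx \<Rightarrow> real) \<Rightarrow> (nat \<Rightarrow> real)
   \<Rightarrow> ((nat \<Rightarrow> nat \<Rightarrow> real) \<times> (nat \<Rightarrow> real)) list
   \<Rightarrow> ('dy::finite \<Rightarrow> nat \<Rightarrow> real) \<Rightarrow> ('dy \<Rightarrow> real) \<Rightarrow> real^'dx::finite \<Rightarrow> real^'dy" where
  "lrelu_net_eval \<alpha> N W1 b1 Ls Wo bo x =
     output_layer N Wo bo
       (foldl (\<lambda>v (W, b). lrelu_act \<alpha> N (hidden_layer N W b v))
              (lrelu_act \<alpha> N (first_layer N W1 b1 x)) Ls)"

definition lrelu_nets :: "real \<Rightarrow> nat \<Rightarrow> (real^'dx::finite \<Rightarrow> real^'dy::finite) set" where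
  "lrelu_nets \<alpha> N = {lrelu_net_eval \<alpha> N W1 b1 Ls Wo bo | W1 b1 Ls Wo bo. True}"

end

(*
  Say that phi : R^n -> R has unbounded superlevel paths if from every point z an unbounded
  continuous path starts along which phi stays >= phi z. Affine functionals have this property,
  and it survives composition with a homeomorphism (transport the path) and with a singular
  affine map (walk along its kernel). If N <= d_x, a width-N hidden state fits into R^(d_x), the
  unused coordinates being passed through unchanged; each layer then becomes an affine self-map
  followed by coordinatewise leaky-ReLU, which is a homeomorphism for alpha > 0. Hence every
  output coordinate of a network has unbounded superlevel paths and stays 1/2 away from a bump
  of height 1 supported in a ball inside K: the path from the centre crosses the sphere of half
  the radius, where the bump vanishes.

  If N < d_y, the output layer maps into an affine subspace of dimension at most N, with some
  normal w. A continuous map taking the values 0, e_1, ..., e_(d_y) on K cannot be approximated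
  within 1/(2 d_y) by such maps, since that would force |w_k| < |w| / d_y for every k.
*)

theory Submission
  imports Defs
begin

section \<open>Unbounded superlevel paths\<close>

definition unbounded_superlevel_paths :: "('a::real_normed_vector \<Rightarrow> real) \<Rightarrow> bool" where
  "unbounded_superlevel_paths \<phi> \<longleftrightarrow>
     (\<forall>z. \<exists>\<gamma>::real \<Rightarrow> 'a. continuous_on {0..} \<gamma> \<and> \<gamma> 0 = z \<and> (\<forall>t\<ge>0. \<phi> z \<le> \<phi> (\<gamma> t))
        \<and> \<not> bounded (\<gamma> ` {0..}))"

definition preserves_superlevel_paths ::
    "('a::real_normed_vector \<Rightarrow> 'b::real_normed_vector) \<Rightarrow> bool" where
  "preserves_superlevel_paths T \<longleftrightarrow>
     (\<forall>\<phi>. unbounded_superlevel_paths \<phi> \<longrightarrow> unbounded_superlevel_paths (\<phi> \<circ> T))"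

lemma preserves_superlevel_paths_comp:
  "preserves_superlevel_paths T \<Longrightarrow> preserves_superlevel_paths U
    \<Longrightarrow> preserves_superlevel_paths (U \<circ> T)"
  unfolding preserves_superlevel_paths_def by (metis comp_assoc)

lemma unbounded_ray:
  fixes d z :: "'a::real_normed_vector"
  assumes "d \<noteq> 0"
  shows "\<not> bounded ((\<lambda>t::real. z + t *\<^sub>R d) ` {0..})"
proof
  assume "bounded ((\<lambda>t::real. z + t *\<^sub>R d) ` {0..})"
  then obtain B where B: "\<And>t. t \<ge> 0 \<Longrightarrow> norm (z + t *\<^sub>R d) \<le> B"
    unfolding bounded_iff by auto
  define t where "t = (B + norm z + 1) / norm d"
  have "norm z \<le> B"
    using B[of 0] by simp
  then have "B + norm z + 1 > 0"
    using norm_ge_zero[of z] by linarith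
  then have t: "t \<ge> 0" "t * norm d = B + norm z + 1"
    using assms by (auto simp: t_def)
  have "norm (t *\<^sub>R d) \<le> norm (z + t *\<^sub>R d) + norm z"
    using norm_triangle_ineq4[of "z + t *\<^sub>R d" z] by simp
  also have "\<dots> \<le> B + norm z"
    using B[OF t(1)] by simp
  finally show False
    using t by simp
qed

lemma superlevel_path_along_ray:
  fixes d z :: "'a::real_normed_vector"
  assumes "d \<noteq> 0" and "\<And>t. t \<ge> 0 \<Longrightarrow> \<phi> z \<le> \<phi> (z + t *\<^sub>R d)"
  shows "\<exists>\<gamma>::real \<Rightarrow> 'a. continuous_on {0..} \<gamma> \<and> \<gamma> 0 = z \<and> (\<forall>t\<ge>0. \<phi> z \<le> \<phi> (\<gamma> t))
           \<and> \<not> bounded (\<gamma> ` {0..})"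
  using assms unbounded_ray[OF assms(1)]
  by (intro exI[of _ "\<lambda>t. z + t *\<^sub>R d"]) (auto intro!: continuous_intros)

lemma affine_functional_unbounded_superlevel_paths:
  fixes l :: "'a::euclidean_space \<Rightarrow> real"
  assumes "linear l"
  shows "unbounded_superlevel_paths (\<lambda>y. l y + c)"
  unfolding unbounded_superlevel_paths_def
proof
  fix z
  obtain b :: 'a where "b \<in> Basis"
    using nonempty_Basis by blast
  define d where "d = (if l b \<ge> 0 then b else - b)"
  have "d \<noteq> 0" "l d \<ge> 0"
    using \<open>b \<in> Basis\<close> linear_neg[OF assms] by (auto simp: d_def)
  then show "\<exists>\<gamma>::real \<Rightarrow> 'a. continuous_on {0..} \<gamma> \<and> \<gamma> 0 = z
               \<and> (\<forall>t\<ge>0. l z + c \<le> l (\<gamma> t) + c) \<and> \<not> bounded (\<gamma> ` {0..})"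
    by (intro superlevel_path_along_ray) (auto simp: linear_add[OF assms] linear_scale[OF assms])
qed

lemma homeomorphism_preserves_superlevel_paths:
  fixes T :: "'a::euclidean_space \<Rightarrow> 'b::euclidean_space"
  assumes "homeomorphism UNIV UNIV T S"
  shows "preserves_superlevel_paths T"
  unfolding preserves_superlevel_paths_def unbounded_superlevel_paths_def
proof (intro allI impI)
  fix \<phi> :: "'b \<Rightarrow> real" and z :: 'a
  assume "\<forall>z. \<exists>\<gamma>::real \<Rightarrow> 'b. continuous_on {0..} \<gamma> \<and> \<gamma> 0 = z \<and> (\<forall>t\<ge>0. \<phi> z \<le> \<phi> (\<gamma> t))
            \<and> \<not> bounded (\<gamma> ` {0..})"
  then obtain \<gamma> :: "real \<Rightarrow> 'b" where \<gamma>: "continuous_on {0..} \<gamma>" "\<gamma> 0 = T z"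
    "\<forall>t\<ge>0. \<phi> (T z) \<le> \<phi> (\<gamma> t)" "\<not> bounded (\<gamma> ` {0..})"
    by blast
  have TS: "T (S y) = y" and ST: "S (T x) = x" and contS: "continuous_on UNIV S"
    and contT: "continuous_on UNIV T" for x y
    using assms by (auto simp: homeomorphism_def)
  have "continuous_on {0..} (S \<circ> \<gamma>)"
    using continuous_on_compose[OF \<gamma>(1) continuous_on_subset[OF contS]] by simp
  moreover have "\<not> bounded ((S \<circ> \<gamma>) ` {0..})"
  proof
    assume "bounded ((S \<circ> \<gamma>) ` {0..})"
    then have "compact (T ` closure ((S \<circ> \<gamma>) ` {0..}))"
      by (intro compact_continuous_image continuous_on_subset[OF contT]) (simp_all add: compact_closure)
    moreover have "\<gamma> ` {0..} = T ` ((S \<circ> \<gamma>) ` {0..})"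
      by (simp add: image_comp comp_def TS)
    then have "\<gamma> ` {0..} \<subseteq> T ` closure ((S \<circ> \<gamma>) ` {0..})"
      using closure_subset by (metis image_mono)
    ultimately show False
      using \<gamma>(4) compact_imp_bounded bounded_subset by blast
  qed
  ultimately show "\<exists>\<gamma>'::real \<Rightarrow> 'a. continuous_on {0..} \<gamma>' \<and> \<gamma>' 0 = z
      \<and> (\<forall>t\<ge>0. (\<phi> \<circ> T) z \<le> (\<phi> \<circ> T) (\<gamma>' t)) \<and> \<not> bounded (\<gamma>' ` {0..})"
    using \<gamma>(2,3) by (intro exI[of _ "S \<circ> \<gamma>"]) (simp add: TS ST)
qed

lemma affine_preserves_superlevel_paths:
  fixes L :: "'a::euclidean_space \<Rightarrow> 'a"
  assumes L: "linear L"
  shows "preserves_superlevel_paths (\<lambda>y. L y + c)"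
proof (cases "inj L")
  case True
  then obtain L' where L': "linear L'" "\<And>x. L' (L x) = x" "\<And>y. L (L' y) = y"
    using linear_injective_isomorphism[OF L] by blast
  have bL: "bounded_linear L" "bounded_linear L'"
    using L L'(1) by (simp_all add: linear_conv_bounded_linear[symmetric])
  have "homeomorphism UNIV UNIV (\<lambda>y. L y + c) (\<lambda>y. L' (y - c))"
    by (intro homeomorphismI continuous_intros bounded_linear.continuous_on[OF bL(1)]
        bounded_linear.continuous_on[OF bL(2)]) (simp_all add: L')
  then show ?thesis
    by (rule homeomorphism_preserves_superlevel_paths)
next
  case False
  then obtain d where d: "L d = 0" "d \<noteq> 0"
    using linear_injective_0[OF L] by blast
  show ?thesis
    unfolding preserves_superlevel_paths_def unbounded_superlevel_paths_def
    by (intro allI impI superlevel_path_along_ray[OF d(2)])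
      (simp add: linear_add[OF L] linear_scale[OF L] d(1))
qed

lemma lrelu_inverse: "\<alpha> > 0 \<Longrightarrow> lrelu \<alpha> (lrelu (1 / \<alpha>) x) = x"
  unfolding lrelu_def by (auto simp: field_simps zero_less_mult_iff)

lemma lrelu_preserves_superlevel_paths:
  assumes "\<alpha> > 0"
  shows "preserves_superlevel_paths (\<lambda>y::real^'n. \<chi> j. lrelu \<alpha> (y $ j))"
proof -
  have "continuous_on UNIV (\<lambda>y::real^'n. \<chi> j. lrelu a (y $ j))" for a
  proof -
    have "lrelu a = (\<lambda>x. max 0 x + a * min 0 x)"
      unfolding lrelu_def by auto
    then show ?thesis
      by (simp only:) (intro continuous_intros)
  qed
  moreover have "lrelu (1 / \<alpha>) (lrelu \<alpha> x) = x" for x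
    using lrelu_inverse[of "1 / \<alpha>"] assms by simp
  ultimately have "homeomorphism UNIV UNIV (\<lambda>y::real^'n. \<chi> j. lrelu \<alpha> (y $ j))
      (\<lambda>y. \<chi> j. lrelu (1 / \<alpha>) (y $ j))"
    using lrelu_inverse[OF assms] by (intro homeomorphismI) (simp_all add: vec_eq_iff)
  then show ?thesis
    by (rule homeomorphism_preserves_superlevel_paths)
qed

section \<open>Width at most the input dimension\<close>

definition padded_layer ::
    "(nat \<Rightarrow> 'n) \<Rightarrow> nat \<Rightarrow> (real^'n::finite \<Rightarrow> nat \<Rightarrow> real) \<Rightarrow> real^'n \<Rightarrow> real^'n" where
  "padded_layer \<iota> N F y =
     (\<chi> j. if j \<in> \<iota> ` {..<N} then F y (the_inv_into {..<N} \<iota> j) else y $ j)"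

definition hidden_state :: "(nat \<Rightarrow> 'n) \<Rightarrow> nat \<Rightarrow> real^'n::finite \<Rightarrow> nat \<Rightarrow> real" where
  "hidden_state \<iota> N y = (\<lambda>i. if i < N then y $ \<iota> i else 0)"

lemma padded_layer_nth:
  "inj_on \<iota> {..<N} \<Longrightarrow> i < N \<Longrightarrow> padded_layer \<iota> N F y $ \<iota> i = F y i"
  by (simp add: padded_layer_def the_inv_into_f_f)

lemma lrelu_act_padded_layer:
  "inj_on \<iota> {..<N} \<Longrightarrow>
    lrelu_act \<alpha> N (F y) = hidden_state \<iota> N (\<chi> j. lrelu \<alpha> (padded_layer \<iota> N F y $ j))"
  by (auto simp: lrelu_act_def hidden_state_def padded_layer_nth)

lemma linear_weighted_components: "linear (\<lambda>y::real^'n::finite. \<Sum>j\<in>A. c j * y $ k j)"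
  by (rule linearI) (simp_all add: sum.distrib algebra_simps sum_distrib_left)

lemma padded_layer_preserves_superlevel_paths:
  fixes \<iota> :: "nat \<Rightarrow> 'n::finite"
  assumes inj: "inj_on \<iota> {..<N}" and lin: "\<And>i. i < N \<Longrightarrow> linear (\<lambda>y. F y i - F 0 i)"
  shows "preserves_superlevel_paths (padded_layer \<iota> N F)"
proof -
  define L where "L = padded_layer \<iota> N (\<lambda>y i. F y i - F 0 i)"
  define c :: "real^'n" where
    "c = (\<chi> j. if j \<in> \<iota> ` {..<N} then F 0 (the_inv_into {..<N} \<iota> j) else 0)"
  have add: "F (x + y) i = F x i + F y i - F 0 i"
    and scale: "F (a *\<^sub>R x) i = a * (F x i - F 0 i) + F 0 i" if "i < N" for x y a i
    using linear_add[OF lin[OF that], of x y] linear_scale[OF lin[OF that], of a x] by simp_all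
  have "linear L"
    using inj by (intro linearI) (auto simp: L_def padded_layer_def vec_eq_iff the_inv_into_f_f
        add scale algebra_simps)
  moreover have "padded_layer \<iota> N F = (\<lambda>y. L y + c)"
    by (auto simp: fun_eq_iff vec_eq_iff L_def c_def padded_layer_def)
  ultimately show ?thesis
    by (simp add: affine_preserves_superlevel_paths)
qed

lemma hidden_layers_factor:
  assumes "\<alpha> > 0" and inj: "inj_on \<iota> {..<N}" and "preserves_superlevel_paths Y0"
  shows "\<exists>Y. preserves_superlevel_paths Y \<and>
           (\<forall>x. foldl (\<lambda>v (W, b). lrelu_act \<alpha> N (hidden_layer N W b v)) (hidden_state \<iota> N (Y0 x)) Ls
                  = hidden_state \<iota> N (Y x))"
  using assms(3)
proof (induction Ls arbitrary: Y0)
  case Nil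
  then show ?case
    by auto
next
  case (Cons Wb Ls)
  obtain W b where Wb: "Wb = (W, b)"
    by fastforce
  define F where "F = (\<lambda>y. hidden_layer N W b (hidden_state \<iota> N y))"
  define Y1 where "Y1 = (\<lambda>y. \<chi> j. lrelu \<alpha> (y $ j)) \<circ> padded_layer \<iota> N F \<circ> Y0"
  have "linear (\<lambda>y. F y i - F 0 i)" if "i < N" for i
    using that linear_weighted_components[where c = "W i" and k = \<iota> and A = "{..<N}"]
    by (simp add: F_def hidden_layer_def hidden_state_def)
  then have "preserves_superlevel_paths Y1"
    unfolding Y1_def using Cons.prems assms(1) inj
    by (intro preserves_superlevel_paths_comp padded_layer_preserves_superlevel_paths
        lrelu_preserves_superlevel_paths)
  moreover have "lrelu_act \<alpha> N (F (Y0 x)) = hidden_state \<iota> N (Y1 x)" for x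
    by (simp add: Y1_def lrelu_act_padded_layer[OF inj])
  ultimately show ?case
    using Cons.IH by (simp add: Wb F_def)
qed

lemma lrelu_net_eval_factors:
  fixes W1 :: "nat \<Rightarrow> 'n::finite \<Rightarrow> real"
  assumes "\<alpha> > 0" and "N \<le> CARD('n)"
  obtains Y :: "real^'n \<Rightarrow> real^'n" and \<iota> where "preserves_superlevel_paths Y"
    and "\<And>x. lrelu_net_eval \<alpha> N W1 b1 Ls Wo bo x = output_layer N Wo bo (hidden_state \<iota> N (Y x))"
proof -
  obtain \<iota> :: "nat \<Rightarrow> 'n" where "bij_betw \<iota> {0..<CARD('n)} UNIV"
    using ex_bij_betw_nat_finite[of "UNIV :: 'n set"] by auto
  then have inj: "inj_on \<iota> {..<N}"
    using assms(2) by (auto simp: bij_betw_def intro: inj_on_subset)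
  define F where "F = first_layer N W1 b1"
  define Y1 where "Y1 = (\<lambda>y. \<chi> j. lrelu \<alpha> (y $ j)) \<circ> padded_layer \<iota> N F"
  have "linear (\<lambda>x. F x i - F 0 i)" if "i < N" for i
    using that linear_weighted_components[where c = "W1 i" and k = id and A = UNIV]
    by (simp add: F_def first_layer_def)
  then have "preserves_superlevel_paths Y1"
    unfolding Y1_def using assms(1) inj
    by (intro preserves_superlevel_paths_comp padded_layer_preserves_superlevel_paths
        lrelu_preserves_superlevel_paths)
  obtain Y where Y: "preserves_superlevel_paths Y"
    "\<forall>x. foldl (\<lambda>v (W, b). lrelu_act \<alpha> N (hidden_layer N W b v)) (hidden_state \<iota> N (Y1 x)) Ls
           = hidden_state \<iota> N (Y x)"
    using hidden_layers_factor[OF assms(1) inj \<open>preserves_superlevel_paths Y1\<close>] by blast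
  have "lrelu_act \<alpha> N (first_layer N W1 b1 x) = hidden_state \<iota> N (Y1 x)" for x
    using lrelu_act_padded_layer[OF inj, of \<alpha> F x] by (simp add: Y1_def F_def)
  then show ?thesis
    using that[OF Y(1)] Y(2) by (simp add: lrelu_net_eval_def)
qed

lemma lrelu_net_component_unbounded_superlevel_paths:
  fixes g :: "real^'n::finite \<Rightarrow> real^'m::finite"
  assumes "\<alpha> > 0" and "N \<le> CARD('n)" and "g \<in> lrelu_nets \<alpha> N"
  shows "unbounded_superlevel_paths (\<lambda>x. g x $ k)"
proof -
  obtain W1 b1 Ls Wo bo where g: "g = lrelu_net_eval \<alpha> N W1 b1 Ls Wo bo"
    using assms(3) unfolding lrelu_nets_def by blast
  obtain Y :: "real^'n \<Rightarrow> real^'n" and \<iota> where Y: "preserves_superlevel_paths Y"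
    and gY: "\<And>x. g x = output_layer N Wo bo (hidden_state \<iota> N (Y x))"
    using lrelu_net_eval_factors[OF assms(1,2)] unfolding g by blast
  have "unbounded_superlevel_paths (\<lambda>y. (\<Sum>j<N. Wo k j * y $ \<iota> j) + bo k)"
    by (rule affine_functional_unbounded_superlevel_paths[OF linear_weighted_components])
  with Y have "unbounded_superlevel_paths ((\<lambda>y. (\<Sum>j<N. Wo k j * y $ \<iota> j) + bo k) \<circ> Y)"
    unfolding preserves_superlevel_paths_def by blast
  moreover have "(\<lambda>y. (\<Sum>j<N. Wo k j * y $ \<iota> j) + bo k) \<circ> Y = (\<lambda>x. g x $ k)"
    by (simp add: fun_eq_iff gY output_layer_def hidden_state_def)
  ultimately show ?thesis
    by simp
qed

lemma unbounded_superlevel_paths_far_from_bump: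
  fixes \<phi> :: "'a::real_normed_vector \<Rightarrow> real"
  assumes "unbounded_superlevel_paths \<phi>" and "r > 0" and "ball c r \<subseteq> K"
  shows "\<exists>x\<in>K. 1 / 2 \<le> \<bar>max 0 (1 - 2 * dist x c / r) - \<phi> x\<bar>"
proof -
  obtain \<gamma> :: "real \<Rightarrow> 'a" where \<gamma>: "continuous_on {0..} \<gamma>" "\<gamma> 0 = c"
    "\<And>t. t \<ge> 0 \<Longrightarrow> \<phi> c \<le> \<phi> (\<gamma> t)" "\<not> bounded (\<gamma> ` {0..})"
    using assms(1) unfolding unbounded_superlevel_paths_def by metis
  have "\<not> \<gamma> ` {0..} \<subseteq> cball c (r / 2)"
    using \<gamma>(4) bounded_cball bounded_subset by blast
  then obtain t1 where "t1 \<in> {0..}" "\<gamma> t1 \<notin> cball c (r / 2)"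
    by blast
  then have "t1 \<ge> 0" "r / 2 < dist (\<gamma> t1) c"
    by (auto simp: dist_commute)
  moreover have "continuous_on {0..t1} (\<lambda>t. dist (\<gamma> t) c)"
    by (intro continuous_intros continuous_on_subset[OF \<gamma>(1)]) auto
  ultimately obtain t where "t \<ge> 0" and t: "dist (\<gamma> t) c = r / 2"
    using IVT'[of "\<lambda>t. dist (\<gamma> t) c" 0 "r / 2" t1] \<gamma>(2) assms(2) by auto
  have "\<gamma> t \<in> K" "c \<in> K"
    using t assms(2,3) by (auto simp: dist_commute)
  moreover have "max 0 (1 - 2 * dist c c / r) = 1" "max 0 (1 - 2 * dist (\<gamma> t) c / r) = 0"
    using t assms(2) by simp_all
  moreover have "1 / 2 \<le> \<bar>1 - \<phi> c\<bar> \<or> 1 / 2 \<le> \<bar>0 - \<phi> (\<gamma> t)\<bar>"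
    using \<gamma>(3)[OF \<open>t \<ge> 0\<close>] by linarith
  ultimately show ?thesis
    by metis
qed

lemma lrelu_nets_not_dense_if_width_le_input:
  fixes K :: "(real^'dx::finite) set"
  assumes "\<alpha> > 0" and "interior K \<noteq> {}" and "N \<le> CARD('dx)"
  shows "\<exists>f :: real^'dx \<Rightarrow> real^'dy::finite. continuous_on K f \<and>
           (\<exists>\<epsilon>>0. \<forall>g\<in>lrelu_nets \<alpha> N. \<exists>x\<in>K. \<epsilon> \<le> dist (f x) (g x))"
proof -
  obtain c r where "r > 0" "ball c r \<subseteq> K"
    using assms(2) mem_interior by blast
  define f :: "real^'dx \<Rightarrow> real^'dy" where "f x = (\<chi> k. max 0 (1 - 2 * dist x c / r))" for x
  have "continuous_on K f"
    unfolding f_def using \<open>r > 0\<close> by (intro continuous_intros) auto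
  moreover have "\<exists>x\<in>K. 1 / 2 \<le> dist (f x) (g x)" if g: "g \<in> lrelu_nets \<alpha> N" for g
  proof -
    fix k :: 'dy
    obtain x where "x \<in> K" "1 / 2 \<le> \<bar>f x $ k - g x $ k\<bar>"
      using unbounded_superlevel_paths_far_from_bump[OF
          lrelu_net_component_unbounded_superlevel_paths[OF assms(1,3) g] \<open>r > 0\<close> \<open>ball c r \<subseteq> K\<close>]
      by (auto simp: f_def)
    then show ?thesis
      using component_le_norm_cart[of "f x - g x" k] by (intro bexI[of _ x]) (auto simp: dist_norm)
  qed
  ultimately show ?thesis
    by (intro exI[of _ f] conjI exI[of _ "1 / 2"]) auto
qed

section \<open>Width below the output dimension\<close>

lemma output_layer_range_orthogonal:
  fixes Wo :: "'m::finite \<Rightarrow> nat \<Rightarrow> real"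
  assumes "N < CARD('m)"
  obtains w :: "real^'m" where "w \<noteq> 0"
    and "\<And>v v'. inner w (output_layer N Wo bo v - output_layer N Wo bo v') = 0"
proof -
  define col where "col j = (\<chi> k. Wo k j)" for j
  have "dim (col ` {..<N}) \<le> N"
    using dim_le_card[of "col ` {..<N}" "col ` {..<N}"] card_image_le[of "{..<N}" col]
    by (simp add: span_superset)
  then have "dim (col ` {..<N}) < DIM(real^'m)"
    using assms by simp
  then obtain w where "w \<noteq> 0" and w: "\<And>y. y \<in> span (col ` {..<N}) \<Longrightarrow> orthogonal w y"
    using orthogonal_to_subspace_exists by blast
  have "output_layer N Wo bo v - output_layer N Wo bo v' = (\<Sum>j<N. (v j - v' j) *\<^sub>R col j)" for v v'
    by (simp add: vec_eq_iff output_layer_def col_def sum_component sum_subtractf algebra_simps)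
  moreover have "(\<Sum>j<N. (v j - v' j) *\<^sub>R col j) \<in> span (col ` {..<N})" for v v'
    by (intro span_sum span_scale span_base) auto
  ultimately have "inner w (output_layer N Wo bo v - output_layer N Wo bo v') = 0" for v v'
    using w unfolding orthogonal_def by metis
  then show ?thesis
    by (rule that[OF \<open>w \<noteq> 0\<close>])
qed

lemma far_from_maps_with_flat_range:
  fixes f g :: "'a \<Rightarrow> real^'m::finite"
  assumes "w \<noteq> 0" and flat: "\<And>x y. inner w (g x - g y) = 0"
    and "f c = 0" and "\<And>k. f (q k) = axis k 1"
  shows "\<exists>x\<in>insert c (range q). 1 / (2 * CARD('m)) \<le> dist (f x) (g x)"
proof (rule ccontr)
  define \<epsilon> :: real where "\<epsilon> = 1 / (2 * CARD('m))"
  assume "\<not> ?thesis"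
  then have near: "dist (f x) (g x) < \<epsilon>" if "x \<in> insert c (range q)" for x
    using that by (auto simp: \<epsilon>_def not_le)
  have close: "\<bar>inner w (f x - g x)\<bar> < norm w * \<epsilon>" if "x \<in> insert c (range q)" for x
  proof -
    have "\<bar>inner w (f x - g x)\<bar> \<le> norm w * dist (f x) (g x)"
      using Cauchy_Schwarz_ineq2 by (simp add: dist_norm)
    also have "\<dots> < norm w * \<epsilon>"
      using near[OF that] \<open>w \<noteq> 0\<close> by simp
    finally show ?thesis .
  qed
  have wk: "\<bar>w $ k\<bar> < 2 * \<epsilon> * norm w" for k
  proof -
    have "w $ k = inner w (f (q k) - g (q k)) - inner w (f c - g c)"
      using flat[of "q k" c] assms(3,4) by (simp add: inner_diff_right inner_axis)
    then have "\<bar>w $ k\<bar> \<le> \<bar>inner w (f (q k) - g (q k))\<bar> + \<bar>inner w (f c - g c)\<bar>"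
      by (simp only: abs_triangle_ineq4)
    also have "\<dots> < norm w * \<epsilon> + norm w * \<epsilon>"
      using close by (intro add_strict_mono) auto
    finally show ?thesis
      by simp
  qed
  have "norm w \<le> (\<Sum>k\<in>UNIV. \<bar>w $ k\<bar>)"
    by (rule norm_le_l1_cart)
  also have "\<dots> < (\<Sum>k\<in>(UNIV :: 'm set). 2 * \<epsilon> * norm w)"
    by (rule sum_strict_mono) (simp_all add: wk)
  finally show False
    by (simp add: \<epsilon>_def)
qed

lemma hat_functions_in_ball:
  fixes c :: "'a::euclidean_space"
  assumes "r > 0"
  obtains f :: "'a \<Rightarrow> real^'m::finite" and q where "continuous_on UNIV f" and "f c = 0"
    and "\<And>k. f (q k) = axis k 1" and "\<And>k. q k \<in> ball c r"
proof -
  obtain e :: "'m \<Rightarrow> nat" where e: "bij_betw e UNIV {0..<CARD('m)}"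
    using ex_bij_betw_finite_nat[of "UNIV :: 'm set"] by auto
  obtain u :: 'a where u: "norm u = 1"
    using vector_choose_size[of 1] by auto
  define \<rho> where "\<rho> = r / (CARD('m) + 1)"
  define hat :: "real \<Rightarrow> real" where "hat s = max 0 (1 - \<bar>s\<bar>)" for s
  define q where "q k = c + ((e k + 1) * \<rho>) *\<^sub>R u" for k
  define f :: "'a \<Rightarrow> real^'m" where "f x = (\<chi> k. hat (inner (x - c) u / \<rho> - (e k + 1)))" for x
  have "\<rho> > 0"
    using assms by (simp add: \<rho>_def)
  have "continuous_on UNIV f"
    unfolding f_def hat_def using \<open>\<rho> > 0\<close> by (intro continuous_intros) auto
  moreover have "f c = 0"
    by (simp add: f_def hat_def vec_eq_iff)
  moreover have "f (q k) = axis k 1" for k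
  proof -
    have "hat (real (e k) - real (e k')) = (if k' = k then 1 else 0)" for k'
    proof (cases "k' = k")
      case False
      then have "e k \<noteq> e k'"
        using e by (auto simp: bij_betw_def inj_eq)
      then have "1 \<le> \<bar>real (e k) - real (e k')\<bar>"
        by linarith
      then show ?thesis
        using False by (simp add: hat_def)
    qed (simp add: hat_def)
    moreover have "inner (q k - c) u / \<rho> = e k + 1"
      using u \<open>\<rho> > 0\<close> by (simp add: q_def dot_square_norm)
    ultimately show ?thesis
      by (simp add: f_def vec_eq_iff axis_def)
  qed
  moreover have "q k \<in> ball c r" for k
  proof -
    have "e k + 1 \<le> CARD('m)"
      using bij_betwE[OF e] by (simp add: Suc_le_eq)
    then have "(e k + 1) * \<rho> < (CARD('m) + 1) * \<rho>"
      using \<open>\<rho> > 0\<close> by (simp add: mult_less_cancel_right)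
    then show ?thesis
      using u \<open>\<rho> > 0\<close> assms by (simp add: q_def dist_norm \<rho>_def)
  qed
  ultimately show ?thesis
    by (rule that)
qed

lemma lrelu_nets_not_dense_if_width_lt_output:
  fixes K :: "(real^'dx::finite) set"
  assumes "interior K \<noteq> {}" and "N < CARD('dy::finite)"
  shows "\<exists>f :: real^'dx \<Rightarrow> real^'dy. continuous_on K f \<and>
           (\<exists>\<epsilon>>0. \<forall>g\<in>lrelu_nets \<alpha> N. \<exists>x\<in>K. \<epsilon> \<le> dist (f x) (g x))"
proof -
  obtain c r where "r > 0" "ball c r \<subseteq> K"
    using assms(1) mem_interior by blast
  obtain f :: "real^'dx \<Rightarrow> real^'dy" and q where f: "continuous_on UNIV f" "f c = 0"
    "\<And>k. f (q k) = axis k 1" and q: "\<And>k. q k \<in> ball c r"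
    using hat_functions_in_ball[OF \<open>r > 0\<close>] by blast
  have "insert c (range q) \<subseteq> K"
    using q \<open>r > 0\<close> \<open>ball c r \<subseteq> K\<close> by auto
  moreover have "\<exists>x\<in>insert c (range q). 1 / (2 * CARD('dy)) \<le> dist (f x) (g x)"
    if "g \<in> lrelu_nets \<alpha> N" for g
  proof -
    from that obtain W1 b1 Ls Wo bo where g: "g = lrelu_net_eval \<alpha> N W1 b1 Ls Wo bo"
      unfolding lrelu_nets_def by blast
    obtain w where "w \<noteq> 0" "\<And>v v'. inner w (output_layer N Wo bo v - output_layer N Wo bo v') = 0"
      using output_layer_range_orthogonal[OF assms(2)] by blast
    then have flat: "inner w (g x - g y) = 0" for x y
      by (simp add: g lrelu_net_eval_def)
    show ?thesis
      by (rule far_from_maps_with_flat_range[where g = g, OF \<open>w \<noteq> 0\<close> flat f(2,3)])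
  qed
  ultimately have "\<forall>g\<in>lrelu_nets \<alpha> N. \<exists>x\<in>K. 1 / (2 * CARD('dy)) \<le> dist (f x) (g x)"
    by blast
  then show ?thesis
    using continuous_on_subset[OF f(1), of K]
    by (intro exI[of _ f] conjI exI[of _ "1 / (2 * CARD('dy))"]) auto
qed

theorem lemma2p3:
  fixes K :: "(real^'dx::finite) set" and \<alpha> :: real and N :: nat
  assumes "\<alpha> > 0" and "\<alpha> \<noteq> 1"
    and "compact K" and "interior K \<noteq> {}"
    and "N < max (CARD('dx) + 1) (CARD('dy::finite))"
  shows "\<exists>f :: real^'dx \<Rightarrow> real^'dy. continuous_on K f \<and>
           (\<exists>\<epsilon>>0. \<forall>g\<in>lrelu_nets \<alpha> N. \<exists>x\<in>K. \<epsilon> \<le> dist (f x) (g x))"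
proof (cases "N \<le> CARD('dx)")
  case True
  then show ?thesis
    using lrelu_nets_not_dense_if_width_le_input assms(1,4) by blast
next
  case False
  then have "N < CARD('dy)"
    using assms(5) by simp
  then show ?thesis
    using lrelu_nets_not_dense_if_width_lt_output assms(4) by blast
qed

end
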